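(* Let $a_1<\dots<a_n$ and $d_1,\dots,d_n$ be real numbers forming a symmetric unit with $a_n=-a_1$, i.e. $a_{n+1-i}=-a_i$ and $d_{n+1-i}=d_i$ for all $i\in\{1,\dots,n\}$. Then for every $H\in\mathbb{R}$, the maximum over $c\in\mathbb{R}$ of $\big|\sum_{i=1}^n d_i\sin(Ha_i+c)\big|$ is attained at $c=\pi/2$ (equivalently at $c=-\pi/2$); that is, one may take $c_{max}(H)=\pm\pi/2$.
   Context: For an array of Josephson junctions with real positions $a_1<\dots<a_n$ and real strengths $d_1,\dots,d_n$, and an applied magnetic field $H\in\mathbb{R}$, the maximal current in the magnetic approximation is $\gamma_{max}(H)=\max_{c\in\mathbb{R}}\big|\sum_{i=1}^n d_i\sin(Ha_i+c)\big|$, and $c_{max}(H)$ denotes a value of $c$ at which this maximum is attained. *)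

theory Defs
  imports "HOL-Analysis.Analysis"
begin

definition junction_current :: "nat \<Rightarrow> (nat \<Rightarrow> real) \<Rightarrow> (nat \<Rightarrow> real) \<Rightarrow> real \<Rightarrow> real \<Rightarrow> real" where
  "junction_current n a d H c = (\<Sum>i=1..n. d i * sin (H * a i + c))"

definition gamma_max :: "nat \<Rightarrow> (nat \<Rightarrow> real) \<Rightarrow> (nat \<Rightarrow> real) \<Rightarrow> real \<Rightarrow> real" where
  "gamma_max n a d H = (SUP c. \<bar>junction_current n a d H c\<bar>)"

end

theory Submission
  imports Defs
begin

text \<open>Reflection symmetry of the array makes the sine moment \<open>\<Sum> d\<^sub>i sin (H a\<^sub>i)\<close> an odd sum,
  hence zero. Expanding \<open>sin (H a\<^sub>i + c)\<close>, the current is then \<open>sin c\<close> times the cosine moment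
  \<open>\<Sum> d\<^sub>i cos (H a\<^sub>i)\<close>, and its modulus is largest where \<open>\<bar>sin c\<bar> = 1\<close>.\<close>

lemma sum_reflect_odd_eq_0:
  fixes f :: "nat \<Rightarrow> 'a::real_vector"
  assumes odd: "\<And>i. 1 \<le> i \<Longrightarrow> i \<le> n \<Longrightarrow> f (n + 1 - i) = - f i"
  shows "(\<Sum>i=1..n. f i) = 0"
proof -
  have "(\<Sum>i=1..n. f i) = (\<Sum>i=1..n. f (n + 1 - i))"
    by (rule sum.atLeastAtMost_rev)
  also have "\<dots> = (\<Sum>i=1..n. - f i)"
    by (rule sum.cong) (auto simp del: One_nat_def intro: odd)
  also have "\<dots> = - (\<Sum>i=1..n. f i)"
    by (simp add: sum_negf)
  finally have "(2::real) *\<^sub>R (\<Sum>i=1..n. f i) = 0"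
    by (simp add: scaleR_2 eq_neg_iff_add_eq_0)
  then show ?thesis
    by simp
qed

lemma junction_current_sin_cos:
  "junction_current n a d H c =
     sin c * (\<Sum>i=1..n. d i * cos (H * a i)) + cos c * (\<Sum>i=1..n. d i * sin (H * a i))"
  unfolding junction_current_def
  by (simp add: sin_add sum_distrib_left sum.distrib algebra_simps)

lemma junction_current_symmetric:
  assumes sym_a: "\<And>i. 1 \<le> i \<Longrightarrow> i \<le> n \<Longrightarrow> a (n + 1 - i) = - a i"
    and sym_d: "\<And>i. 1 \<le> i \<Longrightarrow> i \<le> n \<Longrightarrow> d (n + 1 - i) = d i"
  shows "junction_current n a d H c = sin c * (\<Sum>i=1..n. d i * cos (H * a i))"
proof -
  have "(\<Sum>i=1..n. d i * sin (H * a i)) = 0"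
    by (rule sum_reflect_odd_eq_0) (simp del: One_nat_def add: sym_a sym_d)
  then show ?thesis
    by (simp add: junction_current_sin_cos)
qed

lemma gamma_max_eq_maximum:
  assumes "\<And>c. \<bar>junction_current n a d H c\<bar> \<le> \<bar>junction_current n a d H c\<^sub>0\<bar>"
  shows "gamma_max n a d H = \<bar>junction_current n a d H c\<^sub>0\<bar>"
  unfolding gamma_max_def by (rule cSup_eq_maximum) (auto intro: assms)

theorem mainTheorem4:
  fixes n :: nat and a d :: "nat \<Rightarrow> real" and H :: real
  assumes incr: "\<And>i j. 1 \<le> i \<Longrightarrow> i < j \<Longrightarrow> j \<le> n \<Longrightarrow> a i < a j"
    and sym_a: "\<And>i. 1 \<le> i \<Longrightarrow> i \<le> n \<Longrightarrow> a (n + 1 - i) = - a i"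
    and sym_d: "\<And>i. 1 \<le> i \<Longrightarrow> i \<le> n \<Longrightarrow> d (n + 1 - i) = d i"
  shows "(\<forall>c. \<bar>junction_current n a d H c\<bar> \<le> \<bar>junction_current n a d H (pi/2)\<bar>)
       \<and> (\<forall>c. \<bar>junction_current n a d H c\<bar> \<le> \<bar>junction_current n a d H (-pi/2)\<bar>)
       \<and> gamma_max n a d H = \<bar>junction_current n a d H (pi/2)\<bar>
       \<and> gamma_max n a d H = \<bar>junction_current n a d H (-pi/2)\<bar>"
proof -
  define A where "A = (\<Sum>i=1..n. d i * cos (H * a i))"
  have current: "junction_current n a d H c = sin c * A" for c
    unfolding A_def using sym_a sym_d by (rule junction_current_symmetric)
  have bound: "\<bar>junction_current n a d H c\<bar> \<le> \<bar>A\<bar>" for c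
    unfolding current abs_mult using abs_sin_le_one[of c]
    by (simp add: mult_left_le_one_le)
  have plus: "\<bar>junction_current n a d H (pi/2)\<bar> = \<bar>A\<bar>"
    and minus: "\<bar>junction_current n a d H (-pi/2)\<bar> = \<bar>A\<bar>"
    by (simp_all add: current)
  show ?thesis
    using bound gamma_max_eq_maximum[of n a d H "pi/2"] unfolding plus minus by simp
qed

end
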